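(* Let $X$ be a compact metric space, $T\colon X\to X$ continuous, and $x\in X$. Then $V^{\log}(x)\subset\overline{\mathrm{conv}}(V(x))$, where the closed convex hull is taken in the space of Borel measures on $X$ with the weak-$*$ topology.
   Context: For $N\ge1$ let $\mathrm{Emp}(x,N)=\frac1N\sum_{n=1}^N\delta_{T^{n-1}(x)}$, and for $N\ge2$ let $\mathrm{Emp}^{\log}(x,N)=\frac1{\log N}\sum_{n=1}^N\frac1n\delta_{T^{n-1}(x)}$. $V(x)$ is the set of Borel probability measures $\nu$ on $X$ such that $\mathrm{Emp}(x,N_k)\to\nu$ weak-$*$ for some increasing sequence $(N_k)$; $V^{\log}(x)$ is the set of Borel probability measures $\nu$ such that $\mathrm{Emp}^{\log}(x,N_k)\to\nu$ weak-$*$ for some increasing sequence $(N_k)$. *)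

theory Defs
  imports "HOL-Analysis.Analysis" "HOL-Probability.Probability"
begin

definition borel_on :: "'a::metric_space set \<Rightarrow> 'a measure" where
  "borel_on X = restrict_space borel X"

definition finite_borel_measures :: "'a::metric_space set \<Rightarrow> 'a measure set" where
  "finite_borel_measures X =
     {\<mu>. space \<mu> = X \<and> sets \<mu> = sets (borel_on X) \<and> finite_measure \<mu>}"

definition prob_borel_measures :: "'a::metric_space set \<Rightarrow> 'a measure set" where
  "prob_borel_measures X =
     {\<mu>. space \<mu> = X \<and> sets \<mu> = sets (borel_on X) \<and> prob_space \<mu>}"

definition wsum_measure ::
  "'a::metric_space set \<Rightarrow> 'b set \<Rightarrow> ('b \<Rightarrow> real) \<Rightarrow> ('b \<Rightarrow> 'a measure) \<Rightarrow> 'a measure" where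
  "wsum_measure X I w \<mu> =
     measure_of X (sets (borel_on X)) (\<lambda>A. \<Sum>i\<in>I. ennreal (w i) * emeasure (\<mu> i) A)"

definition dirac_on :: "'a::metric_space set \<Rightarrow> 'a \<Rightarrow> 'a measure" where
  "dirac_on X y = return (borel_on X) y"

definition Emp :: "'a::metric_space set \<Rightarrow> ('a \<Rightarrow> 'a) \<Rightarrow> 'a \<Rightarrow> nat \<Rightarrow> 'a measure" where
  "Emp X T x N = wsum_measure X {1..N} (\<lambda>n. 1 / real N) (\<lambda>n. dirac_on X ((T ^^ (n - 1)) x))"

(* Emp^log(x,N) = 1/log N \<Sum>_{n=1}^N 1/n \<delta>_{T^{n-1} x}  (used for N \<ge> 2) *)
definition Emp_log :: "'a::metric_space set \<Rightarrow> ('a \<Rightarrow> 'a) \<Rightarrow> 'a \<Rightarrow> nat \<Rightarrow> 'a measure" where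
  "Emp_log X T x N = wsum_measure X {1..N} (\<lambda>n. 1 / (ln (real N) * real n))
                        (\<lambda>n. dirac_on X ((T ^^ (n - 1)) x))"

definition weak_star_conv :: "'a::metric_space set \<Rightarrow> (nat \<Rightarrow> 'a measure) \<Rightarrow> 'a measure \<Rightarrow> bool" where
  "weak_star_conv X \<mu> \<nu> \<longleftrightarrow>
     (\<forall>f::'a \<Rightarrow> real. continuous_on X f \<longrightarrow>
        (\<lambda>k. integral\<^sup>L (\<mu> k) f) \<longlonglongrightarrow> integral\<^sup>L \<nu> f)"

definition weak_star_topology :: "'a::metric_space set \<Rightarrow> 'a measure topology" where
  "weak_star_topology X = topology_generated_by
     {{\<mu> \<in> finite_borel_measures X. integral\<^sup>L \<mu> f \<in> U} | f U.
        continuous_on X f \<and> open (U :: real set)}"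

definition conv_measures :: "'a::metric_space set \<Rightarrow> 'a measure set \<Rightarrow> 'a measure set" where
  "conv_measures X S =
     {wsum_measure X I w \<nu> | (I :: nat set) w \<nu>. finite I \<and> I \<noteq> {} \<and>
        (\<forall>i\<in>I. 0 \<le> w i \<and> \<nu> i \<in> S) \<and> sum w I = 1}"

definition V :: "'a::metric_space set \<Rightarrow> ('a \<Rightarrow> 'a) \<Rightarrow> 'a \<Rightarrow> 'a measure set" where
  "V X T x = {\<nu> \<in> prob_borel_measures X.
      \<exists>N::nat \<Rightarrow> nat. strict_mono N \<and> (\<forall>k. 1 \<le> N k) \<and>
        weak_star_conv X (\<lambda>k. Emp X T x (N k)) \<nu>}"

definition V_log :: "'a::metric_space set \<Rightarrow> ('a \<Rightarrow> 'a) \<Rightarrow> 'a \<Rightarrow> 'a measure set" where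
  "V_log X T x = {\<nu> \<in> prob_borel_measures X.
      \<exists>N::nat \<Rightarrow> nat. strict_mono N \<and> (\<forall>k. 2 \<le> N k) \<and>
        weak_star_conv X (\<lambda>k. Emp_log X T x (N k)) \<nu>}"

end

(* First, Borel probability measures on a compact metric space form a
   sequentially compact set for the weak-* topology; this follows from Helly's selection theorem
   once X is coded into the real line by a Borel injection whose inverse is continuous on the
   closure of its range.  Consequently, for large n each empirical measure Emp(x,n) is weak-* close
   to some element of V(x).  Second, summation by parts writes Emp^log(x,N) as a combination of the
   Emp(x,n), n <= N, with nonnegative weights of total mass harm N / ln N -> 1, in which any fixed
   initial segment is negligible.  Replacing each Emp(x,n) by a nearby element of V(x) therefore
   yields convex combinations of elements of V(x) with the same weak-* limits as Emp^log(x,N_k). *)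

theory Submission
  imports Defs
begin

lemma space_borel_on [simp]: "space (borel_on X) = X"
  by (simp add: borel_on_def space_restrict_space)

lemma sigma_algebra_borel_on: "sigma_algebra X (sets (borel_on X))"
  using sets.sigma_algebra_axioms[of "borel_on X"] by simp

lemma continuous_on_imp_borel_measurable_borel_on:
  "continuous_on X f \<Longrightarrow> f \<in> borel_measurable (borel_on X)"
  unfolding borel_on_def by (rule borel_measurable_continuous_on_restrict)

lemma continuous_on_compact_abs_bound:
  fixes f :: "'a::metric_space \<Rightarrow> real"
  assumes "compact X" "continuous_on X f"
  obtains B where "0 \<le> B" "\<And>y. y \<in> X \<Longrightarrow> \<bar>f y\<bar> \<le> B"
proof -
  have "bounded (f ` X)" using assms by (intro compact_imp_bounded compact_continuous_image)
  then obtain B where "\<forall>z\<in>f ` X. norm z \<le> B" by (auto simp: bounded_iff)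
  then have "\<And>y. y \<in> X \<Longrightarrow> \<bar>f y\<bar> \<le> max 0 B" by fastforce
  then show ?thesis using that[of "max 0 B"] by auto
qed

section \<open>Finite weighted sums of measures\<close>

locale finite_wsum =
  fixes X :: "'a::metric_space set" and I :: "'b set" and w :: "'b \<Rightarrow> real"
    and \<mu> :: "'b \<Rightarrow> 'a measure"
  assumes finite_I: "finite I" and w_nonneg: "\<And>i. i \<in> I \<Longrightarrow> 0 \<le> w i"
    and \<mu>_finite_borel: "\<And>i. i \<in> I \<Longrightarrow> \<mu> i \<in> finite_borel_measures X"
begin

abbreviation "W \<equiv> wsum_measure X I w \<mu>"

lemma space_\<mu>: "i \<in> I \<Longrightarrow> space (\<mu> i) = X"
  and sets_\<mu>: "i \<in> I \<Longrightarrow> sets (\<mu> i) = sets (borel_on X)"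
  and finite_measure_\<mu>: "i \<in> I \<Longrightarrow> finite_measure (\<mu> i)"
  using \<mu>_finite_borel by (auto simp: finite_borel_measures_def)

lemma space_W [simp]: "space W = X"
  and sets_W [simp]: "sets W = sets (borel_on X)"
proof -
  have "sets (borel_on X) \<subseteq> Pow X" using sets.space_closed[of "borel_on X"] by simp
  then show "space W = X" unfolding wsum_measure_def by (simp add: space_measure_of_conv)
  show "sets W = sets (borel_on X)" unfolding wsum_measure_def
    by (simp add: sigma_algebra.sets_measure_of_eq[OF sigma_algebra_borel_on])
qed

lemma emeasure_W:
  assumes "A \<in> sets (borel_on X)"
  shows "emeasure W A = (\<Sum>i\<in>I. ennreal (w i) * emeasure (\<mu> i) A)"
  unfolding wsum_measure_def
proof (rule emeasure_measure_of_sigma[OF sigma_algebra_borel_on _ _ assms])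
  show "positive (sets (borel_on X)) (\<lambda>A. \<Sum>i\<in>I. ennreal (w i) * emeasure (\<mu> i) A)"
    by (simp add: positive_def)
  show "countably_additive (sets (borel_on X)) (\<lambda>A. \<Sum>i\<in>I. ennreal (w i) * emeasure (\<mu> i) A)"
  proof (rule countably_additiveI)
    fix A :: "nat \<Rightarrow> 'a set"
    assume A: "range A \<subseteq> sets (borel_on X)" "disjoint_family A"
    have "(\<Sum>n. \<Sum>i\<in>I. ennreal (w i) * emeasure (\<mu> i) (A n))
        = (\<Sum>i\<in>I. \<Sum>n. ennreal (w i) * emeasure (\<mu> i) (A n))"
      by (rule suminf_sum) simp
    also have "\<dots> = (\<Sum>i\<in>I. ennreal (w i) * emeasure (\<mu> i) (\<Union>n. A n))"
    proof (rule sum.cong[OF refl])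
      fix i assume i: "i \<in> I"
      have "(\<Sum>n. emeasure (\<mu> i) (A n)) = emeasure (\<mu> i) (\<Union>n. A n)"
        using A sets_\<mu>[OF i] by (intro suminf_emeasure) auto
      then show "(\<Sum>n. ennreal (w i) * emeasure (\<mu> i) (A n))
          = ennreal (w i) * emeasure (\<mu> i) (\<Union>n. A n)"
        by (simp add: ennreal_suminf_cmult)
    qed
    finally show "(\<Sum>n. \<Sum>i\<in>I. ennreal (w i) * emeasure (\<mu> i) (A n))
        = (\<Sum>i\<in>I. ennreal (w i) * emeasure (\<mu> i) (\<Union>n. A n))" .
  qed
qed

lemma measurable_W_iff: "f \<in> measurable W N \<longleftrightarrow> f \<in> measurable (borel_on X) N"
  by (rule measurable_cong_sets[THEN arg_cong[where f="\<lambda>A. f \<in> A"]]) simp_all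

lemma measurable_\<mu>_iff: "i \<in> I \<Longrightarrow> f \<in> measurable (\<mu> i) N \<longleftrightarrow> f \<in> measurable (borel_on X) N"
  by (rule measurable_cong_sets[THEN arg_cong[where f="\<lambda>A. f \<in> A"]]) (simp_all add: sets_\<mu>)

lemma nn_integral_W:
  assumes "f \<in> borel_measurable (borel_on X)"
  shows "(\<integral>\<^sup>+y. f y \<partial>W) = (\<Sum>i\<in>I. ennreal (w i) * (\<integral>\<^sup>+y. f y \<partial>\<mu> i))"
  using assms
proof (induction rule: borel_measurable_induct)
  case (cong f g)
  have "(\<integral>\<^sup>+y. f y \<partial>W) = (\<integral>\<^sup>+y. g y \<partial>W)"
    using cong by (intro nn_integral_cong) auto
  moreover have "\<And>i. i \<in> I \<Longrightarrow> (\<integral>\<^sup>+y. f y \<partial>\<mu> i) = (\<integral>\<^sup>+y. g y \<partial>\<mu> i)"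
    using cong space_\<mu> by (intro nn_integral_cong) auto
  ultimately show ?case using cong by simp
next
  case (set A)
  have "(\<integral>\<^sup>+y. indicator A y \<partial>W) = emeasure W A"
    using set by (intro nn_integral_indicator) simp
  also have "\<dots> = (\<Sum>i\<in>I. ennreal (w i) * emeasure (\<mu> i) A)"
    using emeasure_W set by simp
  also have "\<dots> = (\<Sum>i\<in>I. ennreal (w i) * (\<integral>\<^sup>+y. indicator A y \<partial>\<mu> i))"
    using set sets_\<mu> by (intro sum.cong refl) (simp add: nn_integral_indicator)
  finally show ?case .
next
  case (mult u c)
  have "(\<integral>\<^sup>+y. c * u y \<partial>W) = c * (\<integral>\<^sup>+y. u y \<partial>W)"
    using mult by (intro nn_integral_cmult) (simp add: measurable_W_iff)
  moreover have "(\<integral>\<^sup>+y. c * u y \<partial>\<mu> i) = c * (\<integral>\<^sup>+y. u y \<partial>\<mu> i)" if "i \<in> I" for i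
    using mult that by (intro nn_integral_cmult) (simp add: measurable_\<mu>_iff)
  ultimately show ?case using mult by (simp add: sum_distrib_left mult_ac)
next
  case (add u v)
  have "(\<integral>\<^sup>+y. v y + u y \<partial>W) = (\<integral>\<^sup>+y. v y \<partial>W) + (\<integral>\<^sup>+y. u y \<partial>W)"
    using add by (intro nn_integral_add) (simp_all add: measurable_W_iff)
  moreover have "(\<integral>\<^sup>+y. v y + u y \<partial>\<mu> i) = (\<integral>\<^sup>+y. v y \<partial>\<mu> i) + (\<integral>\<^sup>+y. u y \<partial>\<mu> i)"
    if "i \<in> I" for i
    using add that by (intro nn_integral_add) (simp_all add: measurable_\<mu>_iff)
  ultimately show ?case using add by (simp add: sum.distrib distrib_left)
next
  case (seq U)
  have SUP_U: "(SUP n. U n) = (\<lambda>y. SUP n. U n y)" by (rule ext) (simp add: SUP_apply image_image)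
  have mono_convergence: "(\<integral>\<^sup>+y. (SUP n. U n y) \<partial>M) = (SUP n. \<integral>\<^sup>+y. U n y \<partial>M)"
    if "sets M = sets (borel_on X)" for M
    using seq that by (intro nn_integral_monotone_convergence_SUP)
      (simp_all add: measurable_cong_sets[OF that refl])
  have "(\<integral>\<^sup>+y. (SUP n. U n y) \<partial>W) = (SUP n. \<Sum>i\<in>I. ennreal (w i) * (\<integral>\<^sup>+y. U n y \<partial>\<mu> i))"
    using seq by (simp add: mono_convergence)
  also have "\<dots> = (\<Sum>i\<in>I. SUP n. ennreal (w i) * (\<integral>\<^sup>+y. U n y \<partial>\<mu> i))"
    using \<open>incseq U\<close> unfolding incseq_def
    by (intro ennreal_SUP_sum) (auto simp: incseq_def le_fun_def intro!: mult_left_mono nn_integral_mono)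
  also have "\<dots> = (\<Sum>i\<in>I. ennreal (w i) * (\<integral>\<^sup>+y. (SUP n. U n y) \<partial>\<mu> i))"
    using sets_\<mu> by (intro sum.cong refl) (simp add: mono_convergence SUP_mult_left_ennreal)
  finally show ?case unfolding SUP_U .
qed

lemma finite_measure_W: "finite_measure W"
proof (rule finite_measureI)
  have "emeasure W (space W) = (\<Sum>i\<in>I. ennreal (w i) * emeasure (\<mu> i) X)"
    using emeasure_W[of X] sets.top[of "borel_on X"] by simp
  also have "\<dots> < \<top>"
  proof (subst ennreal_sum_less_top[OF finite_I], intro ballI)
    fix i assume i: "i \<in> I"
    have "emeasure (\<mu> i) X < \<top>"
      using finite_measure.emeasure_finite[OF finite_measure_\<mu>[OF i], of X] space_\<mu>[OF i]
      by (simp add: top.not_eq_extremum)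
    then show "ennreal (w i) * emeasure (\<mu> i) X < \<top>"
      by (simp add: ennreal_mult_less_top)
  qed
  finally show "emeasure W (space W) \<noteq> \<infinity>" by simp
qed

lemma W_in_finite_borel_measures: "W \<in> finite_borel_measures X"
  using finite_measure_W by (simp add: finite_borel_measures_def)

lemma integrable_W: "(f :: 'a \<Rightarrow> real) \<in> borel_measurable (borel_on X) \<Longrightarrow> (\<And>y. y \<in> X \<Longrightarrow> \<bar>f y\<bar> \<le> B)
    \<Longrightarrow> integrable W f"
  by (intro finite_measure.integrable_const_bound[OF finite_measure_W, of _ B])
    (auto simp: measurable_W_iff)

lemma integrable_\<mu>: "i \<in> I \<Longrightarrow> (f :: 'a \<Rightarrow> real) \<in> borel_measurable (borel_on X)
    \<Longrightarrow> (\<And>y. y \<in> X \<Longrightarrow> \<bar>f y\<bar> \<le> B) \<Longrightarrow> integrable (\<mu> i) f"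
  by (intro finite_measure.integrable_const_bound[OF finite_measure_\<mu>, of _ _ B])
    (auto simp: measurable_\<mu>_iff space_\<mu>)

lemma integral_W_nonneg:
  assumes f: "f \<in> borel_measurable (borel_on X)"
    and bound: "\<And>y. y \<in> X \<Longrightarrow> 0 \<le> f y \<and> f y \<le> B"
  shows "integral\<^sup>L W f = (\<Sum>i\<in>I. w i * integral\<^sup>L (\<mu> i) f)"
proof -
  have abs_bound: "\<And>y. y \<in> X \<Longrightarrow> \<bar>f y\<bar> \<le> B" using bound by fastforce
  have \<mu>_nonneg: "0 \<le> w i * integral\<^sup>L (\<mu> i) f" if "i \<in> I" for i
    using bound space_\<mu>[OF that] w_nonneg[OF that] by (auto intro!: integral_nonneg_AE)
  have "ennreal (integral\<^sup>L W f) = (\<integral>\<^sup>+y. ennreal (f y) \<partial>W)"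
    using bound by (intro nn_integral_eq_integral[symmetric] integrable_W[OF f abs_bound]) auto
  also have "\<dots> = (\<Sum>i\<in>I. ennreal (w i) * (\<integral>\<^sup>+y. ennreal (f y) \<partial>\<mu> i))"
    using f by (intro nn_integral_W) measurable
  also have "\<dots> = (\<Sum>i\<in>I. ennreal (w i * integral\<^sup>L (\<mu> i) f))"
  proof (rule sum.cong[OF refl])
    fix i assume i: "i \<in> I"
    have "(\<integral>\<^sup>+y. ennreal (f y) \<partial>\<mu> i) = ennreal (integral\<^sup>L (\<mu> i) f)"
      using bound space_\<mu>[OF i] by (intro nn_integral_eq_integral integrable_\<mu>[OF i f abs_bound]) auto
    moreover have "0 \<le> integral\<^sup>L (\<mu> i) f"
      using bound space_\<mu>[OF i] by (intro integral_nonneg_AE) auto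
    ultimately show "ennreal (w i) * (\<integral>\<^sup>+y. ennreal (f y) \<partial>\<mu> i) = ennreal (w i * integral\<^sup>L (\<mu> i) f)"
      using w_nonneg[OF i] by (simp add: ennreal_mult)
  qed
  also have "\<dots> = ennreal (\<Sum>i\<in>I. w i * integral\<^sup>L (\<mu> i) f)"
    using \<mu>_nonneg by (rule sum_ennreal)
  finally have "ennreal (integral\<^sup>L W f) = ennreal (\<Sum>i\<in>I. w i * integral\<^sup>L (\<mu> i) f)" .
  moreover have "0 \<le> integral\<^sup>L W f" using bound by (intro integral_nonneg_AE) auto
  ultimately show ?thesis using \<mu>_nonneg by (simp add: sum_nonneg)
qed

lemma measure_W: "measure W X = (\<Sum>i\<in>I. w i * measure (\<mu> i) X)"
  using integral_W_nonneg[of "\<lambda>_. 1" 1] space_\<mu> by simp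

lemma integral_W:
  assumes f: "f \<in> borel_measurable (borel_on X)" and bound: "\<And>y. y \<in> X \<Longrightarrow> \<bar>f y\<bar> \<le> B"
  shows "integral\<^sup>L W f = (\<Sum>i\<in>I. w i * integral\<^sup>L (\<mu> i) f)"
proof -
  have shift: "integral\<^sup>L M (\<lambda>y. f y + B) = integral\<^sup>L M f + measure M X * B"
    if "finite_measure M" "space M = X" "integrable M f" for M
    using that by (simp add: finite_measure.integrable_const)
  have "integral\<^sup>L W (\<lambda>y. f y + B) = (\<Sum>i\<in>I. w i * integral\<^sup>L (\<mu> i) (\<lambda>y. f y + B))"
    using f bound by (intro integral_W_nonneg[of _ "2 * B"]) (force simp: abs_le_iff)+
  also have "\<dots> = (\<Sum>i\<in>I. w i * integral\<^sup>L (\<mu> i) f) + (\<Sum>i\<in>I. w i * measure (\<mu> i) X) * B"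
    using shift[OF finite_measure_\<mu> space_\<mu> integrable_\<mu>[OF _ f bound]]
    by (simp add: sum.distrib sum_distrib_left distrib_left mult_ac)
  finally show ?thesis
    using shift[OF finite_measure_W space_W integrable_W[OF f bound]] measure_W by simp
qed

lemma W_in_prob_borel_measures:
  assumes "\<And>i. i \<in> I \<Longrightarrow> prob_space (\<mu> i)" and "sum w I = 1"
  shows "W \<in> prob_borel_measures X"
proof -
  have "measure (\<mu> i) X = 1" if "i \<in> I" for i
    using assms(1)[OF that] space_\<mu>[OF that] prob_space.prob_space by metis
  then have "measure W X = 1" using measure_W assms by simp
  then have "prob_space W"
    using finite_measure_W by (intro prob_spaceI) (simp add: finite_measure.emeasure_eq_measure)
  then show ?thesis by (simp add: prob_borel_measures_def)
qed

end

lemma prob_borel_measures_imp_finite_borel_measures: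
  assumes "\<mu> \<in> prob_borel_measures X"
  shows "\<mu> \<in> finite_borel_measures X"
proof -
  have "finite_measure \<mu>"
    using assms prob_space.axioms(1) unfolding prob_borel_measures_def by blast
  then show ?thesis using assms by (simp add: prob_borel_measures_def finite_borel_measures_def)
qed

lemma dirac_on_in_prob_borel_measures: "y \<in> X \<Longrightarrow> dirac_on X y \<in> prob_borel_measures X"
  by (auto simp: dirac_on_def prob_borel_measures_def intro!: prob_space_return)

lemma integral_dirac_on:
  "y \<in> X \<Longrightarrow> (f :: 'a::metric_space \<Rightarrow> real) \<in> borel_measurable (borel_on X)
    \<Longrightarrow> integral\<^sup>L (dirac_on X y) f = f y"
  unfolding dirac_on_def by (subst integral_return) auto

lemma abs_integral_prob_borel_le:
  fixes f :: "'a::metric_space \<Rightarrow> real"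
  assumes "\<mu> \<in> prob_borel_measures X" "f \<in> borel_measurable (borel_on X)"
    and "\<And>y. y \<in> X \<Longrightarrow> \<bar>f y\<bar> \<le> B"
  shows "\<bar>integral\<^sup>L \<mu> f\<bar> \<le> B"
proof -
  interpret prob_space \<mu> using assms(1) by (simp add: prob_borel_measures_def)
  have space: "space \<mu> = X" and sets: "sets \<mu> = sets (borel_on X)"
    using assms(1) by (auto simp: prob_borel_measures_def)
  have f: "f \<in> borel_measurable \<mu>"
    using assms(2) by (simp add: measurable_cong_sets[OF sets refl])
  obtain y where "y \<in> X" using not_empty space by blast
  then have "0 \<le> B" using assms(3)[of y] by linarith
  have "\<bar>integral\<^sup>L \<mu> f\<bar> \<le> integral\<^sup>L \<mu> (\<lambda>y. \<bar>f y\<bar>)"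
    using integral_norm_bound[of \<mu> f] by simp
  also have "\<dots> \<le> integral\<^sup>L \<mu> (\<lambda>y. B)"
    using assms(3) space f \<open>0 \<le> B\<close> by (intro integral_mono integrable_const_bound[of _ B]) auto
  finally show ?thesis by (simp add: prob_space)
qed

context
  fixes X :: "'a::metric_space set" and T :: "'a \<Rightarrow> 'a" and x :: 'a
  assumes T_maps: "T ` X \<subseteq> X" and x_in: "x \<in> X"
begin

lemma orbit_in: "(T ^^ n) x \<in> X"
  by (induction n) (use T_maps x_in in auto)

lemma finite_wsum_orbit_diracs:
  "(\<And>n. 0 \<le> w n) \<Longrightarrow> finite_wsum X {1..N} w (\<lambda>n. dirac_on X ((T ^^ (n - 1)) x))"
  by unfold_locales
    (auto intro!: prob_borel_measures_imp_finite_borel_measures dirac_on_in_prob_borel_measures orbit_in)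

lemma integral_orbit_diracs:
  assumes "compact X" "continuous_on X f" "\<And>n. 0 \<le> w n"
  shows "integral\<^sup>L (wsum_measure X {1..N} w (\<lambda>n. dirac_on X ((T ^^ (n - 1)) x))) f
    = (\<Sum>n=1..N. w n * f ((T ^^ (n - 1)) x))"
proof -
  have f: "f \<in> borel_measurable (borel_on X)"
    using assms(2) by (rule continuous_on_imp_borel_measurable_borel_on)
  obtain B where "\<And>y. y \<in> X \<Longrightarrow> \<bar>f y\<bar> \<le> B"
    using continuous_on_compact_abs_bound[OF assms(1,2)] by metis
  from finite_wsum.integral_W[OF finite_wsum_orbit_diracs[OF assms(3)] f this]
  show ?thesis by (simp only: integral_dirac_on[OF orbit_in f])
qed

lemma Emp_in_prob_borel_measures: "1 \<le> N \<Longrightarrow> Emp X T x N \<in> prob_borel_measures X"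
  unfolding Emp_def
proof (rule finite_wsum.W_in_prob_borel_measures[OF finite_wsum_orbit_diracs])
  show "prob_space (dirac_on X ((T ^^ (n - 1)) x))" for n
    using dirac_on_in_prob_borel_measures[OF orbit_in, of "n - 1"] unfolding prob_borel_measures_def
    by blast
  show "(\<Sum>n=1..N. 1 / real N) = 1" if "1 \<le> N" using that by simp
qed simp

lemma integral_Emp:
  "compact X \<Longrightarrow> continuous_on X f
    \<Longrightarrow> integral\<^sup>L (Emp X T x N) f = (\<Sum>n=1..N. f ((T ^^ (n - 1)) x)) / real N"
  unfolding Emp_def by (simp add: integral_orbit_diracs sum_divide_distrib del: One_nat_def)

lemma integral_Emp_log:
  "compact X \<Longrightarrow> continuous_on X f \<Longrightarrow> 2 \<le> N
    \<Longrightarrow> integral\<^sup>L (Emp_log X T x N) f = (\<Sum>n=1..N. f ((T ^^ (n - 1)) x) / real n) / ln (real N)"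
  unfolding Emp_log_def by (simp add: integral_orbit_diracs sum_divide_distrib mult.commute del: One_nat_def)

end

definition weak_star_nbhd ::
  "'a::metric_space set \<Rightarrow> 'a measure \<Rightarrow> ('a \<Rightarrow> real) set \<Rightarrow> real \<Rightarrow> 'a measure set" where
  "weak_star_nbhd X \<nu> F e =
     {\<mu> \<in> finite_borel_measures X. \<forall>f\<in>F. \<bar>integral\<^sup>L \<mu> f - integral\<^sup>L \<nu> f\<bar> < e}"

lemma weak_star_nbhd_mono:
  "F \<subseteq> F' \<Longrightarrow> e' \<le> e \<Longrightarrow> weak_star_nbhd X \<nu> F' e' \<subseteq> weak_star_nbhd X \<nu> F e"
  unfolding weak_star_nbhd_def by (auto intro: less_le_trans)

lemma generate_weak_star_open_contains_nbhd:
  fixes X :: "'a::metric_space set"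
  assumes "generate_topology_on {{\<mu> \<in> finite_borel_measures X. integral\<^sup>L \<mu> f \<in> U} | f U.
             continuous_on X f \<and> open (U :: real set)} W"
    and "\<nu> \<in> W"
  shows "\<exists>F e. finite F \<and> (\<forall>f\<in>F. continuous_on X f) \<and> 0 < e \<and> weak_star_nbhd X \<nu> F e \<subseteq> W"
  using assms
proof (induction arbitrary: \<nu>)
  case Empty
  then show ?case by simp
next
  case (Int a b)
  from Int.IH(1)[of \<nu>] Int.prems obtain F1 e1 where
      F1: "finite F1" "\<forall>f\<in>F1. continuous_on X f" "0 < e1" "weak_star_nbhd X \<nu> F1 e1 \<subseteq> a"
    by blast
  from Int.IH(2)[of \<nu>] Int.prems obtain F2 e2 where
      F2: "finite F2" "\<forall>f\<in>F2. continuous_on X f" "0 < e2" "weak_star_nbhd X \<nu> F2 e2 \<subseteq> b"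
    by blast
  have "weak_star_nbhd X \<nu> (F1 \<union> F2) (min e1 e2)
      \<subseteq> weak_star_nbhd X \<nu> F1 e1 \<inter> weak_star_nbhd X \<nu> F2 e2"
    by (intro Int_greatest weak_star_nbhd_mono) auto
  then have "weak_star_nbhd X \<nu> (F1 \<union> F2) (min e1 e2) \<subseteq> a \<inter> b"
    using F1(4) F2(4) by blast
  moreover have "finite (F1 \<union> F2)" "\<forall>f\<in>F1 \<union> F2. continuous_on X f" "0 < min e1 e2"
    using F1 F2 by auto
  ultimately show ?case by blast
next
  case (UN K)
  then obtain k where "k \<in> K" "\<nu> \<in> k" by auto
  with UN.IH[of k \<nu>] show ?case by blast
next
  case (Basis s)
  then obtain f :: "'a \<Rightarrow> real" and U where
      s: "s = {\<mu> \<in> finite_borel_measures X. integral\<^sup>L \<mu> f \<in> U}" and f: "continuous_on X f"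
      and U: "open U"
    by auto
  have "integral\<^sup>L \<nu> f \<in> U" using Basis s by auto
  then obtain e where e: "0 < e" "ball (integral\<^sup>L \<nu> f) e \<subseteq> U" using U openE by blast
  then have "weak_star_nbhd X \<nu> {f} e \<subseteq> s"
    by (auto simp: s weak_star_nbhd_def dist_real_def abs_minus_commute subset_iff)
  then show ?case using e f by (intro exI[of _ "{f}"] exI[of _ e]) auto
qed

lemma in_weak_star_closure_ofI:
  fixes X :: "'a::metric_space set"
  assumes "\<nu> \<in> finite_borel_measures X"
    and "\<And>F e. finite F \<Longrightarrow> \<forall>f\<in>F. continuous_on X f \<Longrightarrow> 0 < e
           \<Longrightarrow> \<exists>c\<in>A. c \<in> weak_star_nbhd X \<nu> F e"
  shows "\<nu> \<in> (weak_star_topology X) closure_of A"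
proof -
  have "{\<mu> \<in> finite_borel_measures X. integral\<^sup>L \<mu> (\<lambda>_. 0::real) \<in> UNIV}
      \<in> {{\<mu> \<in> finite_borel_measures X. integral\<^sup>L \<mu> f \<in> U} | f U.
          continuous_on X f \<and> open (U :: real set)}"
    by (intro CollectI exI[of _ "\<lambda>_. 0::real"] exI[of _ "UNIV :: real set"]) auto
  then have "\<nu> \<in> topspace (weak_star_topology X)"
    unfolding weak_star_topology_def topology_generated_by_topspace using assms(1) by blast
  moreover have "\<exists>y\<in>A. y \<in> W" if "\<nu> \<in> W" "openin (weak_star_topology X) W" for W
    using that assms(2) generate_weak_star_open_contains_nbhd[of X W \<nu>]
    by (fastforce simp: weak_star_topology_def openin_topology_generated_by_iff)
  ultimately show ?thesis unfolding closure_of_def by blast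
qed

lemma eventually_weak_star_conv_close:
  fixes F :: "('a::metric_space \<Rightarrow> real) set"
  assumes "weak_star_conv X \<mu> \<nu>" "finite F" "\<forall>f\<in>F. continuous_on X f" "0 < e"
  shows "\<forall>\<^sub>F j in sequentially. \<forall>f\<in>F. \<bar>integral\<^sup>L (\<mu> j) f - integral\<^sup>L \<nu> f\<bar> < e"
proof (rule eventually_ball_finite[OF assms(2)], intro ballI)
  fix f assume "f \<in> F"
  then have "(\<lambda>j. integral\<^sup>L (\<mu> j) f) \<longlonglongrightarrow> integral\<^sup>L \<nu> f"
    using assms(1,3) unfolding weak_star_conv_def by blast
  from tendstoD[OF this assms(4)]
  show "\<forall>\<^sub>F j in sequentially. \<bar>integral\<^sup>L (\<mu> j) f - integral\<^sup>L \<nu> f\<bar> < e"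
    by (simp add: dist_real_def)
qed

section \<open>Weak-* sequential compactness of Borel probability measures\<close>

text \<open>The code of y is a mixed-radix expansion whose
  n-th digit is the index of a net point near y; the radix \<open>4 * length (net n)\<close> leaves enough room
  for distinct digits to keep codes apart.\<close>

locale net_coding =
  fixes X :: "'a::metric_space set" and net :: "nat \<Rightarrow> 'a list"
  assumes compact_X: "compact X" and X_nonempty: "X \<noteq> {}"
    and net_covers: "\<And>n y. y \<in> X \<Longrightarrow> \<exists>i<length (net n). dist y (net n ! i) < 1 / real (Suc n)"
    and net_nonempty: "\<And>n. net n \<noteq> []"
begin

definition mesh :: "nat \<Rightarrow> real" where
  "mesh n = 1 / real (Suc n)"

definition net_index :: "nat \<Rightarrow> 'a \<Rightarrow> nat" where
  "net_index n y = (LEAST i. i < length (net n) \<and> dist y (net n ! i) < mesh n)"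

definition digit_base :: "nat \<Rightarrow> real" where
  "digit_base n = (\<Prod>j<n. 4 * real (length (net j)))"

definition digit_weight :: "nat \<Rightarrow> real" where
  "digit_weight n = 1 / digit_base (Suc n)"

definition code_digit :: "nat \<Rightarrow> 'a \<Rightarrow> real" where
  "code_digit n y = real (net_index n y) * digit_weight n"

definition code :: "'a \<Rightarrow> real" where
  "code y = (\<Sum>n. code_digit n y)"

definition code_tail :: "nat \<Rightarrow> 'a \<Rightarrow> real" where
  "code_tail m y = (\<Sum>k. code_digit (k + Suc m) y)"

lemma mesh_small: assumes "0 < e" "0 < c" shows "\<exists>n. c * mesh n < e"
proof -
  obtain n where "0 < n" "inverse (real n) < e / c"
    using ex_inverse_of_nat_less[of "e / c"] assms by auto
  then have "c * mesh (n - 1) < e"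
    using assms by (simp add: mesh_def field_simps)
  then show ?thesis ..
qed

lemma net_index:
  "y \<in> X \<Longrightarrow> net_index n y < length (net n) \<and> dist y (net n ! net_index n y) < mesh n"
  unfolding net_index_def mesh_def
  using LeastI_ex[of "\<lambda>i. i < length (net n) \<and> dist y (net n ! i) < 1 / real (Suc n)"] net_covers[of y n]
  by auto

lemma net_index_eq_imp_dist:
  "y \<in> X \<Longrightarrow> z \<in> X \<Longrightarrow> net_index n y = net_index n z \<Longrightarrow> dist y z < 2 * mesh n"
  using net_index[of y n] net_index[of z n] dist_triangle2[of y z "net n ! net_index n y"]
  by (simp add: dist_commute)

lemma digit_base_Suc: "digit_base (Suc n) = digit_base n * (4 * real (length (net n)))"
  by (simp add: digit_base_def)

lemma digit_base_nonneg: "0 \<le> digit_base n"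
  by (simp add: digit_base_def prod_nonneg)

lemma digit_base_add: "digit_base n * 4 ^ k \<le> digit_base (n + k)"
proof (induction k)
  case 0
  then show ?case by simp
next
  case (Suc k)
  have "1 \<le> real (length (net (n + k)))"
    using net_nonempty[of "n + k"] by (simp add: Suc_le_eq)
  with Suc digit_base_nonneg have "(digit_base n * 4 ^ k) * 4 \<le> digit_base (n + k) * (4 * real (length (net (n + k))))"
    using Suc by (intro mult_mono) auto
  then show ?case by (simp add: digit_base_Suc mult_ac)
qed

lemma digit_base_ge: "4 ^ n \<le> digit_base n"
  using digit_base_add[of 0 n] by (simp add: digit_base_def)

lemma digit_base_pos: "0 < digit_base n"
  using digit_base_ge[of n] by (smt (verit) zero_less_power)

lemma digit_weight_pos: "0 < digit_weight n"
  using digit_base_pos by (simp add: digit_weight_def)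

lemma digit_weight_antimono: "m \<le> n \<Longrightarrow> digit_weight n \<le> digit_weight m"
proof -
  have "digit_weight (Suc n) \<le> digit_weight n" for n
    using digit_base_add[of "Suc n" 1] digit_base_pos[of "Suc n"] digit_base_pos[of "Suc (Suc n)"]
    unfolding digit_weight_def by (intro divide_left_mono) auto
  then show "m \<le> n \<Longrightarrow> digit_weight n \<le> digit_weight m"
    using decseq_SucI[of digit_weight] by (simp add: decseq_def)
qed

lemma code_digit_nonneg: "0 \<le> code_digit n y"
  using digit_weight_pos[of n] by (simp add: code_digit_def)

lemma code_digit_le: assumes "y \<in> X" shows "code_digit n y \<le> 1 / (4 * digit_base n)"
proof -
  have "code_digit n y \<le> real (length (net n)) * digit_weight n"
    using net_index[OF assms, of n] digit_weight_pos[of n]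
    unfolding code_digit_def by (intro mult_right_mono) auto
  also have "\<dots> = 1 / (4 * digit_base n)"
    using net_nonempty[of n] digit_base_pos[of n] by (simp add: digit_weight_def digit_base_Suc)
  finally show ?thesis .
qed

lemma code_digit_shift_le:
  assumes "y \<in> X" shows "code_digit (k + m) y \<le> (1/4) ^ k / (4 * digit_base m)"
proof -
  have "code_digit (k + m) y \<le> 1 / (4 * digit_base (m + k))"
    using code_digit_le[OF assms] by (simp add: add.commute)
  also have "\<dots> \<le> 1 / (4 * (digit_base m * 4 ^ k))"
    using digit_base_add[of m k] digit_base_pos[of m] digit_base_pos[of "m + k"]
    by (intro divide_left_mono mult_left_mono mult_pos_pos) auto
  also have "\<dots> = (1/4) ^ k / (4 * digit_base m)"
    by (simp add: power_one_over)
  finally show ?thesis .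
qed

lemma summable_code_digit_shift: "y \<in> X \<Longrightarrow> summable (\<lambda>k. code_digit (k + m) y)"
  by (rule summable_comparison_test'[of "\<lambda>k. (1/4::real) ^ k / (4 * digit_base m)" 0])
    (auto simp: code_digit_nonneg code_digit_shift_le summable_geometric summable_divide)

lemma suminf_code_digit_shift_le:
  assumes "y \<in> X" shows "(\<Sum>k. code_digit (k + m) y) \<le> 1 / (3 * digit_base m)"
proof -
  have geom: "(\<lambda>k. (1/4::real) ^ k / (4 * digit_base m)) sums ((1 / (1 - 1/4)) / (4 * digit_base m))"
    by (intro sums_divide geometric_sums) simp
  have "(\<Sum>k. code_digit (k + m) y) \<le> (\<Sum>k. (1/4::real) ^ k / (4 * digit_base m))"
    by (intro suminf_le summable_code_digit_shift[OF assms] sums_summable[OF geom] code_digit_shift_le[OF assms])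
  also have "\<dots> = 1 / (3 * digit_base m)"
    using sums_unique[OF geom] by simp
  finally show ?thesis .
qed

lemma summable_code_digit: "y \<in> X \<Longrightarrow> summable (\<lambda>n. code_digit n y)"
  using summable_code_digit_shift[of y 0] by simp

lemma code_tail_bounds: assumes "y \<in> X" shows "0 \<le> code_tail m y" "code_tail m y \<le> digit_weight m / 3"
proof -
  show "0 \<le> code_tail m y"
    unfolding code_tail_def by (intro suminf_nonneg summable_code_digit_shift[OF assms] code_digit_nonneg)
  show "code_tail m y \<le> digit_weight m / 3"
    using suminf_code_digit_shift_le[OF assms, of "Suc m"] by (simp add: code_tail_def digit_weight_def)
qed

lemma code_split: "y \<in> X \<Longrightarrow> code y = code_tail m y + code_digit m y + (\<Sum>n<m. code_digit n y)"
  using suminf_split_initial_segment[OF summable_code_digit, of y "Suc m"]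
  by (simp add: code_def code_tail_def)

lemma code_bounds: assumes "y \<in> X" shows "0 \<le> code y" "code y \<le> 2"
proof -
  show "0 \<le> code y"
    unfolding code_def by (intro suminf_nonneg summable_code_digit[OF assms] code_digit_nonneg)
  have "code y \<le> 1 / (3 * digit_base 0)"
    using suminf_code_digit_shift_le[OF assms, of 0] by (simp add: code_def)
  then show "code y \<le> 2" by (simp add: digit_base_def)
qed

text \<open>Each digit weighs more than three times all later digits together, so codes that are
  close agree in their leading digits.\<close>

lemma code_close_imp_net_index_eq:
  assumes y: "y \<in> X" and z: "z \<in> X" and close: "\<bar>code y - code z\<bar> < digit_weight n / 2"
  shows "m \<le> n \<Longrightarrow> net_index m y = net_index m z"
proof (induction m rule: less_induct)
  case (less m)
  have same_prefix: "(\<Sum>k<m. code_digit k y) = (\<Sum>k<m. code_digit k z)"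
    using less by (intro sum.cong) (auto simp: code_digit_def)
  show ?case
  proof (rule ccontr)
    assume "net_index m y \<noteq> net_index m z"
    then have "1 \<le> \<bar>real (net_index m y) - real (net_index m z)\<bar>"
      by (cases "net_index m y < net_index m z") auto
    then have "1 * digit_weight m \<le> \<bar>real (net_index m y) - real (net_index m z)\<bar> * digit_weight m"
      using digit_weight_pos[of m] by (intro mult_right_mono) auto
    also have "\<dots> = \<bar>code_digit m y - code_digit m z\<bar>"
      using digit_weight_pos[of m] by (simp add: code_digit_def left_diff_distrib[symmetric] abs_mult)
    finally have "digit_weight m \<le> \<bar>code_digit m y - code_digit m z\<bar>" by simp
    moreover have "code y - code z = (code_tail m y - code_tail m z) + (code_digit m y - code_digit m z)"
      using code_split[OF y, of m] code_split[OF z, of m] same_prefix by simp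
    moreover have "\<bar>code_tail m y - code_tail m z\<bar> \<le> digit_weight m / 3"
      using code_tail_bounds[OF y, of m] code_tail_bounds[OF z, of m] by linarith
    moreover have "digit_weight n \<le> digit_weight m"
      using digit_weight_antimono less.prems by simp
    ultimately show False using close digit_weight_pos[of n] by linarith
  qed
qed

lemma code_close_imp_dist:
  "y \<in> X \<Longrightarrow> z \<in> X \<Longrightarrow> \<bar>code y - code z\<bar> < digit_weight n / 2 \<Longrightarrow> dist y z < 2 * mesh n"
  using code_close_imp_net_index_eq[of y z n n] net_index_eq_imp_dist by simp

lemma net_index_measurable: "net_index n \<in> measurable (borel_on X) (count_space UNIV)"
proof -
  have "{y \<in> space (borel_on X). i < length (net n) \<and> dist y (net n ! i) < mesh n} \<in> sets (borel_on X)"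
    for i
  proof (cases "i < length (net n)")
    case True
    have "{y \<in> space (borel_on X). i < length (net n) \<and> dist y (net n ! i) < mesh n}
        = X \<inter> ball (net n ! i) (mesh n)"
      using True by (auto simp: dist_commute)
    moreover have "X \<inter> ball (net n ! i) (mesh n) \<in> sets (borel_on X)"
      unfolding borel_on_def sets_restrict_space
      by (rule image_eqI[where x="ball (net n ! i) (mesh n)"]) auto
    ultimately show ?thesis by simp
  qed simp
  then have "(\<lambda>y. LEAST i. i < length (net n) \<and> dist y (net n ! i) < mesh n)
      \<in> measurable (borel_on X) (count_space UNIV)"
    by (intro measurable_Least) (simp only: pred_def)
  then show ?thesis
    unfolding net_index_def[abs_def] .
qed

lemma code_measurable: "code \<in> borel_measurable (borel_on X)"
proof (rule borel_measurable_LIMSEQ_metric[of "\<lambda>i y. \<Sum>n<i. code_digit n y"])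
  have "(\<lambda>y. real (net_index n y)) \<in> borel_measurable (borel_on X)" for n
    using measurable_compose[OF net_index_measurable, of real borel] by simp
  then show "(\<lambda>y. \<Sum>n<i. code_digit n y) \<in> borel_measurable (borel_on X)" for i
    unfolding code_digit_def by measurable
next
  fix y assume "y \<in> space (borel_on X)"
  then show "(\<lambda>i. \<Sum>n<i. code_digit n y) \<longlonglongrightarrow> code y"
    unfolding code_def by (intro summable_LIMSEQ summable_code_digit) simp
qed

definition code_range :: "real set" where
  "code_range = closure (code ` X)"

definition decode :: "real \<Rightarrow> 'a" where
  "decode t = (SOME y. y \<in> X \<and>
     (\<forall>n. \<exists>z\<in>X. \<bar>code z - t\<bar> < digit_weight n / 8 \<and> dist z y \<le> 2 * mesh n))"

lemma code_in_code_range: "y \<in> X \<Longrightarrow> code y \<in> code_range"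
  using closure_subset[of "code ` X"] by (auto simp: code_range_def)

lemma decode_exists:
  assumes t: "t \<in> code_range"
  shows "\<exists>y. y \<in> X \<and> (\<forall>n. \<exists>z\<in>X. \<bar>code z - t\<bar> < digit_weight n / 8 \<and> dist z y \<le> 2 * mesh n)"
proof -
  have "\<exists>z. z \<in> X \<and> \<bar>code z - t\<bar> < digit_weight n / 8" for n
  proof -
    obtain u where "u \<in> code ` X" "dist u t < digit_weight n / 8"
      using t digit_weight_pos[of n] unfolding code_range_def closure_approachable
      by (metis zero_less_divide_iff zero_less_numeral)
    then show ?thesis by (auto simp: dist_real_def)
  qed
  then obtain z where z: "\<And>n. z n \<in> X" "\<And>n. \<bar>code (z n) - t\<bar> < digit_weight n / 8" by metis
  obtain l r where l: "l \<in> X" and r: "strict_mono r" and lim: "(z \<circ> r) \<longlonglongrightarrow> l"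
    using compact_imp_seq_compact[OF compact_X] z(1) unfolding seq_compact_def by metis
  have "dist (z n) l \<le> 2 * mesh n" for n
  proof (rule tendsto_upperbound)
    show "(\<lambda>j. dist (z n) (z (r j))) \<longlonglongrightarrow> dist (z n) l"
      using lim by (intro tendsto_intros) (simp add: o_def)
    show "\<forall>\<^sub>F j in sequentially. dist (z n) (z (r j)) \<le> 2 * mesh n"
    proof (rule eventually_sequentiallyI)
      fix j assume "n \<le> j"
      then have "digit_weight (r j) \<le> digit_weight n"
        using seq_suble[OF r, of j] by (intro digit_weight_antimono) simp
      then have "\<bar>code (z n) - code (z (r j))\<bar> < digit_weight n / 2"
        using z(2)[of n] z(2)[of "r j"] digit_weight_pos[of n] by linarith
      then show "dist (z n) (z (r j)) \<le> 2 * mesh n"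
        using code_close_imp_dist[OF z(1) z(1)] by (simp add: less_imp_le)
    qed
  qed simp
  then show ?thesis using l z by blast
qed

lemma decode_in: "t \<in> code_range \<Longrightarrow> decode t \<in> X"
  and decode_approx: "t \<in> code_range
    \<Longrightarrow> \<exists>z\<in>X. \<bar>code z - t\<bar> < digit_weight n / 8 \<and> dist z (decode t) \<le> 2 * mesh n"
  using someI_ex[OF decode_exists] unfolding decode_def by blast+

lemma decode_code: assumes y: "y \<in> X" shows "decode (code y) = y"
proof -
  have "dist y (decode (code y)) < 4 * mesh n" for n
  proof -
    obtain z where z: "z \<in> X" "\<bar>code z - code y\<bar> < digit_weight n / 8" "dist z (decode (code y)) \<le> 2 * mesh n"
      using decode_approx[OF code_in_code_range[OF y], of n] by blast
    have "dist z y < 2 * mesh n"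
      using z(2) digit_weight_pos[of n] by (intro code_close_imp_dist[OF z(1) y]) simp
    then show ?thesis using z(3) dist_triangle[of y "decode (code y)" z] by (simp add: dist_commute)
  qed
  then have "\<not> 0 < dist y (decode (code y))"
    using mesh_small[of _ 4] by (metis not_less_iff_gr_or_eq zero_less_numeral)
  then show ?thesis by simp
qed

lemma dist_decode_le:
  assumes t: "t \<in> code_range" and t': "t' \<in> code_range" and close: "\<bar>t - t'\<bar> < digit_weight n / 8"
  shows "dist (decode t) (decode t') \<le> 6 * mesh n"
proof -
  obtain z where z: "z \<in> X" "\<bar>code z - t\<bar> < digit_weight n / 8" "dist z (decode t) \<le> 2 * mesh n"
    using decode_approx[OF t] by blast
  obtain z' where z': "z' \<in> X" "\<bar>code z' - t'\<bar> < digit_weight n / 8" "dist z' (decode t') \<le> 2 * mesh n"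
    using decode_approx[OF t'] by blast
  have "\<bar>code z - code z'\<bar> < digit_weight n / 2"
    using z(2) z'(2) close digit_weight_pos[of n] by linarith
  then have "dist z z' < 2 * mesh n" by (rule code_close_imp_dist[OF z(1) z'(1)])
  then show ?thesis
    using z(3) z'(3) dist_triangle[of "decode t" "decode t'" z] dist_triangle[of z "decode t'" z']
    by (simp add: dist_commute)
qed

lemma continuous_on_decode: "continuous_on code_range decode"
  unfolding continuous_on_iff
proof (intro ballI allI impI)
  fix t e assume t: "t \<in> code_range" and e: "(0::real) < e"
  obtain n where n: "6 * mesh n < e" using mesh_small[OF e, of 6] by auto
  have "dist (decode t') (decode t) < e" if "t' \<in> code_range" "dist t' t < digit_weight n / 8" for t'
    using dist_decode_le[of t' t n] that t n by (simp add: dist_real_def)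
  then show "\<exists>d>0. \<forall>t'\<in>code_range. dist t' t < d \<longrightarrow> dist (decode t') (decode t) < e"
    using digit_weight_pos[of n] by (intro exI[of _ "digit_weight n / 8"]) auto
qed

lemma decode_continuous_extension:
  fixes f :: "'a \<Rightarrow> real"
  assumes f: "continuous_on X f"
  obtains g B where "\<And>t. isCont g t" "\<And>t. \<bar>g t\<bar> \<le> B" "\<And>t. t \<in> code_range \<Longrightarrow> g t = f (decode t)"
proof -
  obtain B where B: "0 \<le> B" "\<And>y. y \<in> X \<Longrightarrow> \<bar>f y\<bar> \<le> B"
    using continuous_on_compact_abs_bound[OF compact_X f] by metis
  have "continuous_on code_range (f \<circ> decode)"
    using decode_in by (intro continuous_on_compose continuous_on_decode continuous_on_subset[OF f]) auto
  moreover have "closedin (top_of_set UNIV) code_range"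
    by (simp add: code_range_def)
  ultimately obtain g where "continuous_on UNIV g" "\<And>t. t \<in> code_range \<Longrightarrow> g t = f (decode t)"
      "\<And>t. norm (g t) \<le> B"
    using Tietze[of code_range "f \<circ> decode" UNIV B] B decode_in by auto
  then show ?thesis
    using that[of g B] continuous_on_eq_continuous_at[of UNIV g] by auto
qed

definition decode_total :: "real \<Rightarrow> 'a" where
  "decode_total t = (if t \<in> code_range then decode t else (SOME y. y \<in> X))"

lemma decode_total_measurable: "decode_total \<in> measurable borel (borel_on X)"
proof -
  have "decode_total \<in> borel_measurable borel"
    unfolding decode_total_def[abs_def]
    by (intro borel_measurable_continuous_on_if continuous_on_decode continuous_on_const)
      (simp add: code_range_def)
  moreover have "decode_total \<in> space borel \<rightarrow> X"
    using decode_in X_nonempty by (auto simp: decode_total_def some_in_eq)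
  ultimately show ?thesis
    unfolding borel_on_def by (simp add: measurable_restrict_space2_iff)
qed

lemma code_measurable_on:
  "\<mu> \<in> prob_borel_measures X \<Longrightarrow> code \<in> measurable \<mu> borel"
  using code_measurable measurable_cong_sets[of \<mu> "borel_on X" borel borel]
  by (auto simp: prob_borel_measures_def)

lemma real_distribution_distr_code:
  "\<mu> \<in> prob_borel_measures X \<Longrightarrow> real_distribution (distr \<mu> borel code)"
  using prob_space.prob_space_distr[OF _ code_measurable_on]
  by (simp add: real_distribution_def real_distribution_axioms_def prob_borel_measures_def)

lemma integral_distr_code:
  "\<mu> \<in> prob_borel_measures X \<Longrightarrow> (h :: real \<Rightarrow> real) \<in> borel_measurable borel
    \<Longrightarrow> integral\<^sup>L (distr \<mu> borel code) h = integral\<^sup>L \<mu> (\<lambda>y. h (code y))"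
  by (rule integral_distr[OF code_measurable_on])

lemma tight_distr_code:
  assumes "\<And>j. \<mu> j \<in> prob_borel_measures X"
  shows "tight (\<lambda>j. distr (\<mu> j) borel code)"
  unfolding tight_def
proof (intro conjI allI impI)
  show "real_distribution (distr (\<mu> j) borel code)" for j
    using assms by (rule real_distribution_distr_code)
  have "measure (distr (\<mu> j) borel code) {-1<..2} = 1" for j
  proof -
    interpret prob_space "\<mu> j" using assms[of j] by (simp add: prob_borel_measures_def)
    have "space (\<mu> j) = X" using assms[of j] by (simp add: prob_borel_measures_def)
    then have "code -` {-1<..2} \<inter> space (\<mu> j) = space (\<mu> j)"
      using code_bounds by fastforce
    then show ?thesis
      using code_measurable_on[OF assms] by (simp add: measure_distr prob_space)
  qed
  then show "\<exists>a b. a < b \<and> (\<forall>j. 1 - e < measure (distr (\<mu> j) borel code) {a<..b})"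
    if "0 < e" for e :: real
    using that by (intro exI[of _ "-1"] exI[of _ 2]) auto
qed

context
  fixes \<mu> :: "nat \<Rightarrow> 'a::metric_space measure" and L :: "real measure"
  assumes \<mu>: "\<And>j. \<mu> j \<in> prob_borel_measures X"
    and L: "real_distribution L"
    and weak_conv_code: "weak_conv_m (\<lambda>j. distr (\<mu> j) borel code) L"
begin

lemma integral_distr_code_tendsto:
  fixes h :: "real \<Rightarrow> real"
  shows "(\<And>t. isCont h t) \<Longrightarrow> (\<And>t. \<bar>h t\<bar> \<le> B)
    \<Longrightarrow> (\<lambda>j. integral\<^sup>L (\<mu> j) (\<lambda>y. h (code y))) \<longlonglongrightarrow> integral\<^sup>L L h"
  using weak_conv_imp_integral_bdd_continuous_conv[of "\<lambda>j. distr (\<mu> j) borel code" L h B]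
    real_distribution_distr_code[OF \<mu>] L weak_conv_code
  by (simp add: integral_distr_code[OF \<mu>] borel_measurable_continuous_onI
      continuous_at_imp_continuous_on)

text \<open>The limit lives on the closure of the range of the code: test it against the distance
  to that closed set, which integrates to zero along the sequence.\<close>

lemma AE_limit_in_code_range: "AE t in L. t \<in> code_range"
proof -
  interpret L: real_distribution L by (rule L)
  define h where "h t = min 1 (infdist t code_range)" for t
  have h_cont: "isCont h t" for t unfolding h_def by (intro continuous_intros)
  have h_bounds: "0 \<le> h t" "h t \<le> 1" for t
    unfolding h_def using infdist_nonneg[of t code_range] by auto
  have h_measurable: "h \<in> borel_measurable borel"
    using h_cont by (intro borel_measurable_continuous_onI continuous_at_imp_continuous_on) auto
  have "h (code y) = 0" if "y \<in> X" for y
    using that by (simp add: h_def code_in_code_range)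
  then have "integral\<^sup>L (\<mu> j) (\<lambda>y. h (code y)) = 0" for j
    using \<mu>[of j] Bochner_Integration.integral_cong[of "\<mu> j" "\<mu> j" "\<lambda>y. h (code y)" "\<lambda>_. 0"]
    by (simp add: prob_borel_measures_def)
  then have "(\<lambda>j. 0) \<longlonglongrightarrow> integral\<^sup>L L h"
    using integral_distr_code_tendsto[OF h_cont, of 1] h_bounds by simp
  then have "integral\<^sup>L L h = 0"
    using LIMSEQ_unique[OF tendsto_const] by metis
  moreover have "integrable L h"
    using h_bounds h_measurable by (intro L.integrable_const_bound[of _ 1]) auto
  ultimately have "AE t in L. h t = 0"
    using integral_nonneg_eq_0_iff_AE[of L h] h_bounds by simp
  moreover have "t \<in> code_range" if "h t = 0" for t
  proof -
    have "infdist t code_range = 0"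
      using that infdist_nonneg[of t code_range] by (simp add: h_def min_def split: if_splits)
    moreover have "code_range \<noteq> {}"
      using X_nonempty code_in_code_range by blast
    ultimately have "t \<in> closure code_range"
      using in_closure_iff_infdist_zero by blast
    then show ?thesis by (simp add: code_range_def)
  qed
  ultimately show ?thesis by (auto elim: AE_mp)
qed

definition limit_measure :: "'a measure" where
  "limit_measure = distr L (borel_on X) decode_total"

lemma decode_total_measurable_on: "decode_total \<in> measurable L (borel_on X)"
  by (subst measurable_cong_sets[OF real_distribution.events_eq_borel[OF L] refl])
    (rule decode_total_measurable)

lemma limit_measure_in_prob_borel_measures: "limit_measure \<in> prob_borel_measures X"
proof -
  interpret real_distribution L by (rule L)
  show ?thesis
    using prob_space_distr[OF decode_total_measurable_on]
    by (simp add: limit_measure_def prob_borel_measures_def)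
qed

lemma weak_star_conv_limit_measure: "weak_star_conv X \<mu> limit_measure"
  unfolding weak_star_conv_def
proof (intro allI impI)
  fix f :: "'a \<Rightarrow> real" assume f: "continuous_on X f"
  obtain g B where g: "\<And>t. isCont g t" "\<And>t. \<bar>g t\<bar> \<le> B" "\<And>t. t \<in> code_range \<Longrightarrow> g t = f (decode t)"
    using decode_continuous_extension[OF f] by metis
  have f_measurable: "f \<in> borel_measurable (borel_on X)"
    using f by (rule continuous_on_imp_borel_measurable_borel_on)
  have g_measurable: "g \<in> borel_measurable L"
    using g(1) real_distribution.events_eq_borel[OF L]
    by (simp add: borel_measurable_continuous_onI continuous_at_imp_continuous_on
        measurable_cong_sets[of L borel borel borel])
  have "integral\<^sup>L limit_measure f = integral\<^sup>L L (\<lambda>t. f (decode_total t))"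
    unfolding limit_measure_def by (rule integral_distr[OF decode_total_measurable_on f_measurable])
  also have "\<dots> = integral\<^sup>L L g"
  proof (rule integral_cong_AE)
    show "(\<lambda>t. f (decode_total t)) \<in> borel_measurable L"
      using measurable_compose[OF decode_total_measurable_on f_measurable] .
    show "AE t in L. f (decode_total t) = g t"
      using AE_limit_in_code_range by eventually_elim (simp add: decode_total_def g(3))
  qed (rule g_measurable)
  finally have "integral\<^sup>L limit_measure f = integral\<^sup>L L g" .
  moreover have "integral\<^sup>L (\<mu> j) (\<lambda>y. g (code y)) = integral\<^sup>L (\<mu> j) f" for j
    using \<mu>[of j] Bochner_Integration.integral_cong[of "\<mu> j" "\<mu> j" "\<lambda>y. g (code y)" f]
    by (simp add: prob_borel_measures_def g(3) code_in_code_range decode_code)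
  ultimately show "(\<lambda>j. integral\<^sup>L (\<mu> j) f) \<longlonglongrightarrow> integral\<^sup>L limit_measure f"
    using integral_distr_code_tendsto[OF g(1,2)] by simp
qed

end

theorem weak_star_convergent_subseq:
  fixes \<mu> :: "nat \<Rightarrow> 'a measure"
  assumes "\<And>j. \<mu> j \<in> prob_borel_measures X"
  shows "\<exists>r \<nu>. strict_mono r \<and> \<nu> \<in> prob_borel_measures X \<and> weak_star_conv X (\<lambda>j. \<mu> (r j)) \<nu>"
proof -
  obtain r L where r: "strict_mono r" and L: "real_distribution L"
    and conv: "weak_conv_m ((\<lambda>j. distr (\<mu> j) borel code) \<circ> id \<circ> r) L"
    using tight_imp_convergent_subsubsequence[OF tight_distr_code[of \<mu>, OF assms] strict_mono_id] by blast
  then have "weak_conv_m (\<lambda>j. distr (\<mu> (r j)) borel code) L"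
    by (simp add: o_def)
  note limit = limit_measure_in_prob_borel_measures[OF assms L this]
    weak_star_conv_limit_measure[OF assms L this]
  show ?thesis
    using r limit by blast
qed

end

lemma compact_ex_net_coding:
  fixes X :: "'a::metric_space set"
  assumes "compact X" "X \<noteq> {}"
  shows "\<exists>net. net_coding X net"
proof -
  have "\<exists>l. l \<noteq> [] \<and> (\<forall>y\<in>X. \<exists>i<length l. dist y (l ! i) < 1 / real (Suc n))" for n
  proof -
    obtain k where k: "finite k" "k \<subseteq> X" "X \<subseteq> (\<Union>c\<in>k. ball c (1 / real (Suc n)))"
      using seq_compact_imp_totally_bounded[OF compact_imp_seq_compact[OF assms(1)],
          rule_format, of "1 / real (Suc n)"]
      by auto
    obtain l where l: "set l = k" using finite_list[OF k(1)] by blast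
    have "\<exists>i<length l. dist y (l ! i) < 1 / real (Suc n)" if y: "y \<in> X" for y
    proof -
      obtain c where "c \<in> k" "dist c y < 1 / real (Suc n)" using k(3) y by auto
      then show ?thesis using l by (metis dist_commute in_set_conv_nth)
    qed
    moreover have "l \<noteq> []" using k(3) assms(2) l by auto
    ultimately show ?thesis by blast
  qed
  then obtain net :: "nat \<Rightarrow> 'a list" where "\<And>n. net n \<noteq> []"
    "\<And>n y. y \<in> X \<Longrightarrow> \<exists>i<length (net n). dist y (net n ! i) < 1 / real (Suc n)"
    by metis
  with assms show ?thesis
    by (intro exI[of _ net]) (unfold_locales, blast+)
qed

theorem prob_borel_measures_weak_star_seq_compact:
  fixes X :: "'a::metric_space set" and \<mu> :: "nat \<Rightarrow> 'a measure"
  assumes "compact X" and "\<And>j. \<mu> j \<in> prob_borel_measures X"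
  shows "\<exists>r \<nu>. strict_mono r \<and> \<nu> \<in> prob_borel_measures X \<and> weak_star_conv X (\<lambda>j. \<mu> (r j)) \<nu>"
proof -
  have "X \<noteq> {}"
    using assms(2)[of 0] prob_space.not_empty by (fastforce simp: prob_borel_measures_def)
  then obtain net where "net_coding X net"
    using compact_ex_net_coding[OF assms(1)] by blast
  then show ?thesis
    using assms(2) by (rule net_coding.weak_star_convergent_subseq)
qed

section \<open>Logarithmic averages as weighted Cesaro means\<close>

lemma harm_over_ln_tendsto: "(\<lambda>N. harm N / ln (real N)) \<longlonglongrightarrow> (1::real)"
proof -
  have ln_at_top: "filterlim (\<lambda>N. ln (real N)) at_top sequentially"
    by (rule filterlim_compose[OF ln_at_top filterlim_real_sequentially])
  have "(\<lambda>N. 1 + (harm N - ln (real N)) / ln (real N)) \<longlonglongrightarrow> (1::real)"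
    using tendsto_add[OF tendsto_const tendsto_divide_0[OF euler_mascheroni_LIMSEQ
        filterlim_at_top_imp_at_infinity[OF ln_at_top]], of 1] by simp
  moreover have "\<forall>\<^sub>F N in sequentially. 1 + (harm N - ln (real N)) / ln (real N) = harm N / ln (real N)"
    by (rule eventually_sequentiallyI[of 2]) (simp add: field_simps)
  ultimately show ?thesis by (rule Lim_transform_eventually)
qed

lemma inverse_ln_tendsto_0: "(\<lambda>N. 1 / ln (real N)) \<longlonglongrightarrow> (0::real)"
  using tendsto_inverse_0_at_top[OF filterlim_compose[OF ln_at_top filterlim_real_sequentially]]
  by (simp add: divide_inverse)

text \<open>Summation by parts writes the logarithmic sum \<open>\<Sum>n\<le>N. a n / n\<close> as a combination of the
  Cesaro means \<open>(\<Sum>k\<le>n. a k) / n\<close> with these weights.\<close>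

definition abel_weight :: "nat \<Rightarrow> nat \<Rightarrow> real" where
  "abel_weight N n = (if n < N then 1 / (real n + 1) else 1)"

lemma abel_weight_nonneg: "0 \<le> abel_weight N n"
  and abel_weight_le_1: "abel_weight N n \<le> 1"
  by (simp_all add: abel_weight_def)

lemma sum_abel_weight: assumes "1 \<le> N" shows "(\<Sum>n=1..N. abel_weight N n) = harm N"
proof -
  have "(\<Sum>n=1..m. 1 / (real n + 1)) = harm (Suc m) - 1" for m
    by (induction m) (simp_all add: harm_Suc harm_def divide_inverse add.commute)
  moreover obtain m where "N = Suc m" using assms by (cases N) auto
  moreover have "(\<Sum>n=1..m. abel_weight (Suc m) n) = (\<Sum>n=1..m. 1 / (real n + 1))"
    by (intro sum.cong) (auto simp: abel_weight_def)
  ultimately show ?thesis by (simp add: abel_weight_def)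
qed

lemma summation_by_parts_over_index:
  fixes a :: "nat \<Rightarrow> real"
  shows "(\<Sum>n=1..Suc m. a n / real n) =
    (\<Sum>k=1..Suc m. a k) / real (Suc m) + (\<Sum>n=1..m. (\<Sum>k=1..n. a k) / (real n * (real n + 1)))"
proof (induction m)
  case 0
  then show ?case by simp
next
  case (Suc m)
  have "x / c + y / (c + 1) = (x + y) / (c + 1) + x / (c * (c + 1))" if "0 < c" for x y c :: real
    using that by (simp add: divide_simps) (simp add: algebra_simps)
  then have step: "x / real (Suc m) + y / real (Suc (Suc m))
      = (x + y) / real (Suc (Suc m)) + x / (real (Suc m) * (real (Suc m) + 1))" for x y
    by (metis of_nat_Suc of_nat_0_less_iff zero_less_Suc add.commute)
  show ?case
    using Suc step[of "\<Sum>k=1..Suc m. a k" "a (Suc (Suc m))"] by simp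
qed

lemma sum_over_index_eq_abel_weighted_means:
  fixes a :: "nat \<Rightarrow> real" assumes "1 \<le> N"
  shows "(\<Sum>n=1..N. a n / real n) = (\<Sum>n=1..N. abel_weight N n * ((\<Sum>k=1..n. a k) / real n))"
proof -
  obtain m where m: "N = Suc m" using assms by (cases N) auto
  have "(\<Sum>n=1..m. abel_weight (Suc m) n * ((\<Sum>k=1..n. a k) / real n))
      = (\<Sum>n=1..m. (\<Sum>k=1..n. a k) / (real n * (real n + 1)))"
    by (intro sum.cong) (auto simp: abel_weight_def)
  then show ?thesis
    using summation_by_parts_over_index[of a m] by (simp add: m abel_weight_def)
qed

lemma abs_abel_weighted_sum_le:
  fixes u :: "nat \<Rightarrow> real"
  assumes "1 \<le> M" and "\<And>n. 1 \<le> n \<Longrightarrow> \<bar>u n\<bar> \<le> B"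
  shows "\<bar>\<Sum>n=1..M. abel_weight M n * u n\<bar> \<le> harm M * B"
proof -
  have "\<bar>\<Sum>n=1..M. abel_weight M n * u n\<bar> \<le> (\<Sum>n=1..M. abel_weight M n * B)"
    using assms(2) abel_weight_nonneg
    by (intro order_trans[OF sum_abs] sum_mono) (simp add: abs_mult mult_left_mono)
  then show ?thesis
    using sum_abel_weight[OF assms(1)] by (simp add: sum_distrib_right[symmetric])
qed

lemma abs_abel_weighted_sum_le_tail:
  fixes d :: "nat \<Rightarrow> real"
  assumes "1 \<le> M" and "0 \<le> B" "0 \<le> \<delta>"
    and "\<And>n. 1 \<le> n \<Longrightarrow> \<bar>d n\<bar> \<le> B" and "\<And>n. n0 \<le> n \<Longrightarrow> \<bar>d n\<bar> \<le> \<delta>"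
  shows "\<bar>\<Sum>n=1..M. abel_weight M n * d n\<bar> \<le> B * real n0 + harm M * \<delta>"
proof -
  have "\<bar>abel_weight M n * d n\<bar> \<le> (if n < n0 then B else 0) + abel_weight M n * \<delta>" if "1 \<le> n" for n
  proof (cases "n < n0")
    case True
    show ?thesis
    proof -
      have "\<bar>abel_weight M n * d n\<bar> \<le> 1 * B"
        using assms(4)[OF that] abel_weight_nonneg[of M n] abel_weight_le_1[of M n]
        unfolding abs_mult by (intro mult_mono) auto
      moreover have "0 \<le> abel_weight M n * \<delta>"
        using assms(3) abel_weight_nonneg[of M n] by simp
      ultimately show ?thesis using True by simp
    qed
  next
    case False
    then show ?thesis
      using assms(5)[of n] abel_weight_nonneg[of M n] by (simp add: abs_mult mult_left_mono)
  qed
  then have "\<bar>\<Sum>n=1..M. abel_weight M n * d n\<bar>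
      \<le> (\<Sum>n=1..M. if n < n0 then B else 0) + (\<Sum>n=1..M. abel_weight M n) * \<delta>"
    unfolding sum_distrib_right sum.distrib[symmetric]
    by (intro order_trans[OF sum_abs] sum_mono) auto
  also have "(\<Sum>n=1..M. if n < n0 then B else 0) = B * real (card {n\<in>{1..M}. n < n0})"
    by (simp add: sum.If_cases Int_def)
  also have "\<dots> \<le> B * real n0"
    using card_mono[of "{..<n0}" "{n\<in>{1..M}. n < n0}"] assms(2)
    by (intro mult_left_mono) auto
  finally show ?thesis using sum_abel_weight[OF assms(1)] by simp
qed

lemma abel_mean_log_mean_dist_le:
  fixes u v :: "nat \<Rightarrow> real"
  assumes M: "2 \<le> M" and B: "0 \<le> B" and \<delta>: "0 \<le> \<delta>"
    and u: "\<And>n. \<bar>u n\<bar> \<le> B" and v: "\<And>n. 1 \<le> n \<Longrightarrow> \<bar>v n\<bar> \<le> B"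
    and uv: "\<And>n. n0 \<le> n \<Longrightarrow> \<bar>v n - u n\<bar> \<le> \<delta>"
  shows "\<bar>(\<Sum>n=1..M. abel_weight M n / harm M * u n) - (\<Sum>n=1..M. abel_weight M n * v n) / ln (real M)\<bar>
    \<le> B * \<bar>1 - harm M / ln (real M)\<bar> + 2 * B * real n0 / ln (real M) + harm M / ln (real M) * \<delta>"
proof -
  define H L where "H = (harm M :: real)" and "L = ln (real M)"
  define S1 S2 where "S1 = (\<Sum>n=1..M. abel_weight M n * u n)" and "S2 = (\<Sum>n=1..M. abel_weight M n * v n)"
  have H: "0 < H" and L: "0 < L" using M by (simp_all add: H_def L_def)
  have "\<bar>S1\<bar> \<le> H * B"
    unfolding S1_def H_def using M u by (intro abs_abel_weighted_sum_le) auto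
  then have "\<bar>S1\<bar> * \<bar>1 / H - 1 / L\<bar> \<le> (H * B) * \<bar>1 / H - 1 / L\<bar>"
    by (intro mult_right_mono) auto
  also have "\<dots> = B * \<bar>1 - H / L\<bar>"
    using H by (simp add: abs_mult field_simps)
  finally have "\<bar>S1 * (1 / H - 1 / L)\<bar> \<le> B * \<bar>1 - H / L\<bar>"
    by (simp add: abs_mult)
  moreover have "\<bar>S1 - S2\<bar> \<le> 2 * B * real n0 + H * \<delta>"
  proof -
    have "S1 - S2 = (\<Sum>n=1..M. abel_weight M n * (u n - v n))"
      by (simp add: S1_def S2_def sum_subtractf right_diff_distrib)
    also have "\<bar>\<dots>\<bar> \<le> 2 * B * real n0 + H * \<delta>"
    proof (unfold H_def, rule abs_abel_weighted_sum_le_tail)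
      show "\<bar>u n - v n\<bar> \<le> 2 * B" if "1 \<le> n" for n
        using u[of n] v[OF that] by linarith
      show "\<bar>u n - v n\<bar> \<le> \<delta>" if "n0 \<le> n" for n
        using uv[OF that] by linarith
    qed (use M B \<delta> in auto)
    finally show ?thesis .
  qed
  then have "\<bar>(S1 - S2) / L\<bar> \<le> 2 * B * real n0 / L + H / L * \<delta>"
    using L by (simp add: divide_right_mono add_divide_distrib[symmetric])
  moreover have "S1 / H - S2 / L = S1 * (1 / H - 1 / L) + (S1 - S2) / L"
    using H L by (simp add: field_simps)
  moreover have "(\<Sum>n=1..M. abel_weight M n / harm M * u n) = S1 / H"
    by (simp add: S1_def H_def sum_divide_distrib)
  ultimately show ?thesis
    unfolding S2_def[symmetric] H_def[symmetric] L_def[symmetric] by linarith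
qed

lemma eventually_abel_mean_log_mean_close:
  fixes u v :: "nat \<Rightarrow> real"
  assumes B: "0 \<le> B" and \<delta>: "0 < \<delta>"
    and u: "\<And>n. \<bar>u n\<bar> \<le> B" and v: "\<And>n. 1 \<le> n \<Longrightarrow> \<bar>v n\<bar> \<le> B"
    and uv: "\<And>n. n0 \<le> n \<Longrightarrow> \<bar>v n - u n\<bar> \<le> \<delta>"
  shows "\<forall>\<^sub>F M in sequentially.
    \<bar>(\<Sum>n=1..M. abel_weight M n / harm M * u n) - (\<Sum>n=1..M. abel_weight M n * v n) / ln (real M)\<bar>
      < 2 * \<delta>"
proof -
  define U where "U M = B * \<bar>1 - harm M / ln (real M)\<bar> + 2 * B * real n0 / ln (real M)
    + harm M / ln (real M) * \<delta>" for M
  have "(\<lambda>M. 2 * B * real n0 * (1 / ln (real M))) \<longlonglongrightarrow> 0"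
    using tendsto_mult[OF tendsto_const inverse_ln_tendsto_0, of "2 * B * real n0"] by simp
  then have "U \<longlonglongrightarrow> B * \<bar>1 - 1\<bar> + 0 + 1 * \<delta>"
    unfolding U_def by (intro tendsto_intros harm_over_ln_tendsto) simp
  then have "\<forall>\<^sub>F M in sequentially. U M < 2 * \<delta>"
    using \<delta> by (intro order_tendstoD(2)) (simp_all, linarith)
  moreover have "\<forall>\<^sub>F M in sequentially. 2 \<le> M"
    by (rule eventually_ge_at_top)
  ultimately show ?thesis
  proof eventually_elim
    case (elim M)
    then show ?case
      using abel_mean_log_mean_dist_le[of M B \<delta> u v n0] elim B \<delta> u v uv by (simp add: U_def)
  qed
qed

section \<open>Convex combinations of V approximating logarithmic averages\<close>

definition abel_mean :: "'a::metric_space set \<Rightarrow> (nat \<Rightarrow> 'a measure) \<Rightarrow> nat \<Rightarrow> 'a measure" where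
  "abel_mean X \<mu> M = wsum_measure X {1..M} (\<lambda>n. abel_weight M n / harm M) \<mu>"

lemma finite_wsum_abel_mean:
  "(\<And>n. \<mu> n \<in> prob_borel_measures X) \<Longrightarrow> finite_wsum X {1..M} (\<lambda>n. abel_weight M n / harm M) \<mu>"
  by unfold_locales
    (simp_all add: abel_weight_nonneg harm_nonneg prob_borel_measures_imp_finite_borel_measures)

lemma abel_mean_in_conv_measures:
  assumes "1 \<le> M" and "\<And>n. \<mu> n \<in> S"
  shows "abel_mean X \<mu> M \<in> conv_measures X S"
proof -
  have "0 < (harm M :: real)" using assms(1) by simp
  then have "harm M \<noteq> (0 :: real)" by (metis less_irrefl)
  then have "(\<Sum>n=1..M. abel_weight M n / harm M) = 1"
    using sum_abel_weight[OF assms(1)] by (simp add: sum_divide_distrib[symmetric])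
  then show ?thesis
    unfolding conv_measures_def abel_mean_def using assms
    by (intro CollectI exI[of _ "{1..M}"] exI[of _ "\<lambda>n. abel_weight M n / harm M"] exI[of _ \<mu>])
      (auto simp: abel_weight_nonneg harm_nonneg)
qed

lemma integral_abel_mean:
  assumes "\<And>n. \<mu> n \<in> prob_borel_measures X" "compact X" "continuous_on X f"
  shows "integral\<^sup>L (abel_mean X \<mu> M) f = (\<Sum>n=1..M. abel_weight M n / harm M * integral\<^sup>L (\<mu> n) f)"
proof -
  obtain B where "\<And>y. y \<in> X \<Longrightarrow> \<bar>f y\<bar> \<le> B"
    using continuous_on_compact_abs_bound[OF assms(2,3)] by metis
  then show ?thesis
    unfolding abel_mean_def
    by (rule finite_wsum.integral_W[OF finite_wsum_abel_mean[OF assms(1)]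
          continuous_on_imp_borel_measurable_borel_on[OF assms(3)]])
qed

lemma Emp_subseq_converges_in_V:
  fixes X :: "'a::metric_space set"
  assumes X: "compact X" and T: "T ` X \<subseteq> X" and x: "x \<in> X"
    and S: "infinite S" "\<forall>n\<in>S. 1 \<le> n"
  obtains r \<nu> where "strict_mono r" "\<And>j. r j \<in> S" "\<nu> \<in> V X T x"
    "weak_star_conv X (\<lambda>j. Emp X T x (r j)) \<nu>"
proof -
  define q where "q = enumerate S"
  have q: "strict_mono q" "\<And>j. q j \<in> S"
    using strict_mono_enumerate enumerate_in_set S(1) unfolding q_def by blast+
  have "Emp X T x (q j) \<in> prob_borel_measures X" for j
    using q(2)[of j] S(2) Emp_in_prob_borel_measures[OF T x] by blast
  then obtain s \<nu> where s: "strict_mono s" and \<nu>: "\<nu> \<in> prob_borel_measures X"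
    and conv: "weak_star_conv X (\<lambda>j. Emp X T x (q (s j))) \<nu>"
    using prob_borel_measures_weak_star_seq_compact[OF X, of "\<lambda>j. Emp X T x (q j)"] by blast
  have "strict_mono (q \<circ> s)" "\<forall>j. 1 \<le> (q \<circ> s) j"
    using strict_mono_o[OF q(1) s] q(2) S(2) by auto
  then have "\<nu> \<in> V X T x"
    unfolding V_def using \<nu> conv by (auto simp: o_def)
  then show ?thesis
    using that[of "q \<circ> s" \<nu>] strict_mono_o[OF q(1) s] q(2) conv by (simp add: o_def)
qed

lemma Emp_eventually_near_V:
  fixes X :: "'a::metric_space set" and F :: "('a \<Rightarrow> real) set"
  assumes X: "compact X" and T: "T ` X \<subseteq> X" and x: "x \<in> X"
    and F: "finite F" "\<forall>f\<in>F. continuous_on X f" and e: "0 < e"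
  shows "\<forall>\<^sub>F n in sequentially. \<exists>\<mu>\<in>V X T x. \<forall>f\<in>F. \<bar>integral\<^sup>L (Emp X T x n) f - integral\<^sup>L \<mu> f\<bar> < e"
    (is "\<forall>\<^sub>F n in sequentially. ?near n")
proof (rule ccontr)
  define bad where "bad = {n. 1 \<le> n \<and> \<not> ?near n}"
  assume not_eventually: "\<not> ?thesis"
  have "\<not> (\<forall>\<^sub>F n in sequentially. n \<notin> bad)"
  proof
    assume "\<forall>\<^sub>F n in sequentially. n \<notin> bad"
    with eventually_ge_at_top[of 1] have "\<forall>\<^sub>F n in sequentially. ?near n"
      by eventually_elim (auto simp: bad_def)
    with not_eventually show False ..
  qed
  then have "infinite bad"
    by (simp add: cofinite_eq_sequentially[symmetric] eventually_cofinite)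
  moreover have "\<forall>n\<in>bad. 1 \<le> n" by (simp add: bad_def)
  ultimately obtain r \<nu> where r: "\<And>j. r j \<in> bad" and \<nu>: "\<nu> \<in> V X T x"
    and conv: "weak_star_conv X (\<lambda>j. Emp X T x (r j)) \<nu>"
    using Emp_subseq_converges_in_V[OF X T x] by metis
  obtain j where "\<forall>f\<in>F. \<bar>integral\<^sup>L (Emp X T x (r j)) f - integral\<^sup>L \<nu> f\<bar> < e"
    using eventually_weak_star_conv_close[OF conv F e] unfolding eventually_sequentially by blast
  then have "?near (r j)"
    using \<nu> by blast
  moreover have "\<not> ?near (r j)"
    using r[of j] unfolding bad_def by blast
  ultimately show False by contradiction
qed

lemma Emp_near_V_sequence:
  fixes X :: "'a::metric_space set" and F :: "('a \<Rightarrow> real) set"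
  assumes "compact X" "T ` X \<subseteq> X" "x \<in> X" "finite F" "\<forall>f\<in>F. continuous_on X f" "0 < e"
  obtains \<mu> n0 where "\<And>n. \<mu> n \<in> V X T x"
    and "\<And>n f. n0 \<le> n \<Longrightarrow> f \<in> F \<Longrightarrow> \<bar>integral\<^sup>L (Emp X T x n) f - integral\<^sup>L (\<mu> n) f\<bar> < e"
proof -
  obtain n0 where n0: "\<And>n. n0 \<le> n \<Longrightarrow>
      \<exists>\<mu>\<in>V X T x. \<forall>f\<in>F. \<bar>integral\<^sup>L (Emp X T x n) f - integral\<^sup>L \<mu> f\<bar> < e"
    using Emp_eventually_near_V[OF assms] unfolding eventually_sequentially by blast
  then have "\<exists>\<mu>. \<mu> \<in> V X T x \<and>
      (\<forall>f\<in>F. \<bar>integral\<^sup>L (Emp X T x (max n n0)) f - integral\<^sup>L \<mu> f\<bar> < e)" for n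
    by (meson max.cobounded2)
  then obtain \<mu> where "\<And>n. \<mu> n \<in> V X T x \<and>
      (\<forall>f\<in>F. \<bar>integral\<^sup>L (Emp X T x (max n n0)) f - integral\<^sup>L (\<mu> n) f\<bar> < e)"
    by metis
  then show ?thesis
    using that[of \<mu> n0] by (metis max.absorb1)
qed

lemma eventually_Emp_log_close_abel_mean:
  fixes X :: "'a::metric_space set" and f :: "'a \<Rightarrow> real"
  assumes X: "compact X" and T: "T ` X \<subseteq> X" and x: "x \<in> X" and f: "continuous_on X f"
    and \<mu>: "\<And>n. \<mu> n \<in> prob_borel_measures X" and \<delta>: "0 < \<delta>"
    and close: "\<And>n. n0 \<le> n \<Longrightarrow> \<bar>integral\<^sup>L (Emp X T x n) f - integral\<^sup>L (\<mu> n) f\<bar> \<le> \<delta>"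
  shows "\<forall>\<^sub>F M in sequentially.
    \<bar>integral\<^sup>L (abel_mean X \<mu> M) f - integral\<^sup>L (Emp_log X T x M) f\<bar> < 2 * \<delta>"
proof -
  obtain B where B: "0 \<le> B" "\<And>y. y \<in> X \<Longrightarrow> \<bar>f y\<bar> \<le> B"
    using continuous_on_compact_abs_bound[OF X f] by metis
  note f_measurable = continuous_on_imp_borel_measurable_borel_on[OF f]
  have Emp_log_as_means: "integral\<^sup>L (Emp_log X T x M) f
      = (\<Sum>n=1..M. abel_weight M n * integral\<^sup>L (Emp X T x n) f) / ln (real M)" if "2 \<le> M" for M
    using that sum_over_index_eq_abel_weighted_means[of M "\<lambda>n. f ((T ^^ (n - 1)) x)"]
    by (simp add: integral_Emp_log[OF T x X f] integral_Emp[OF T x X f])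
  have "\<forall>\<^sub>F M in sequentially.
    \<bar>(\<Sum>n=1..M. abel_weight M n / harm M * integral\<^sup>L (\<mu> n) f)
      - (\<Sum>n=1..M. abel_weight M n * integral\<^sup>L (Emp X T x n) f) / ln (real M)\<bar> < 2 * \<delta>"
    using B close abs_integral_prob_borel_le[OF \<mu> f_measurable B(2)]
      abs_integral_prob_borel_le[OF Emp_in_prob_borel_measures[OF T x] f_measurable B(2)]
    by (intro eventually_abel_mean_log_mean_close \<delta>) auto
  then show ?thesis
    using eventually_ge_at_top[of 2]
    by eventually_elim (simp add: integral_abel_mean[OF \<mu> X f] Emp_log_as_means)
qed

lemma eventually_abel_mean_in_weak_star_nbhd:
  fixes X :: "'a::metric_space set" and F :: "('a \<Rightarrow> real) set"
  assumes X: "compact X" and T: "T ` X \<subseteq> X" and x: "x \<in> X"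
    and N: "strict_mono N" and conv: "weak_star_conv X (\<lambda>k. Emp_log X T x (N k)) \<nu>"
    and \<mu>: "\<And>n. \<mu> n \<in> prob_borel_measures X"
    and F: "finite F" "\<forall>f\<in>F. continuous_on X f" and e: "0 < e"
    and close: "\<And>n f. n0 \<le> n \<Longrightarrow> f \<in> F \<Longrightarrow>
      \<bar>integral\<^sup>L (Emp X T x n) f - integral\<^sup>L (\<mu> n) f\<bar> < e / 4"
  shows "\<forall>\<^sub>F k in sequentially. abel_mean X \<mu> (N k) \<in> weak_star_nbhd X \<nu> F e"
proof -
  have "\<forall>\<^sub>F k in sequentially. \<forall>f\<in>F.
      \<bar>integral\<^sup>L (abel_mean X \<mu> (N k)) f - integral\<^sup>L (Emp_log X T x (N k)) f\<bar> < e / 2"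
  proof (rule eventually_ball_finite[OF F(1)], intro ballI)
    fix f assume "f \<in> F"
    then have "\<forall>\<^sub>F M in sequentially.
        \<bar>integral\<^sup>L (abel_mean X \<mu> M) f - integral\<^sup>L (Emp_log X T x M) f\<bar> < 2 * (e / 4)"
      using F(2) e close
      by (intro eventually_Emp_log_close_abel_mean[OF X T x _ \<mu>]) (auto intro: less_imp_le)
    from eventually_compose_filterlim[OF this filterlim_subseq[OF N]]
    show "\<forall>\<^sub>F k in sequentially.
        \<bar>integral\<^sup>L (abel_mean X \<mu> (N k)) f - integral\<^sup>L (Emp_log X T x (N k)) f\<bar> < e / 2"
      by simp
  qed
  moreover have "\<forall>\<^sub>F k in sequentially. \<forall>f\<in>F.
      \<bar>integral\<^sup>L (Emp_log X T x (N k)) f - integral\<^sup>L \<nu> f\<bar> < e / 2"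
    using e by (intro eventually_weak_star_conv_close[OF conv F]) simp
  ultimately have "\<forall>\<^sub>F k in sequentially. \<forall>f\<in>F.
      \<bar>integral\<^sup>L (abel_mean X \<mu> (N k)) f - integral\<^sup>L \<nu> f\<bar> < e"
  proof eventually_elim
    case (elim k)
    show ?case
    proof
      fix f assume f: "f \<in> F"
      show "\<bar>integral\<^sup>L (abel_mean X \<mu> (N k)) f - integral\<^sup>L \<nu> f\<bar> < e"
        using elim(1)[rule_format, OF f] elim(2)[rule_format, OF f] by linarith
    qed
  qed
  moreover have "abel_mean X \<mu> M \<in> finite_borel_measures X" for M
    unfolding abel_mean_def using finite_wsum_abel_mean[OF \<mu>]
    by (rule finite_wsum.W_in_finite_borel_measures)
  ultimately show ?thesis
    unfolding weak_star_nbhd_def by simp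
qed

theorem proposition2p1:
  fixes X :: "'a::metric_space set" and T :: "'a \<Rightarrow> 'a" and x :: 'a
  assumes "compact X" and "continuous_on X T" and "T ` X \<subseteq> X" and "x \<in> X"
  shows "V_log X T x \<subseteq> (weak_star_topology X) closure_of (conv_measures X (V X T x))"
proof
  fix \<nu> assume "\<nu> \<in> V_log X T x"
  then obtain N where \<nu>: "\<nu> \<in> prob_borel_measures X" and N: "strict_mono N" "\<forall>k. 2 \<le> N k"
    and conv: "weak_star_conv X (\<lambda>k. Emp_log X T x (N k)) \<nu>"
    unfolding V_log_def by blast
  show "\<nu> \<in> weak_star_topology X closure_of conv_measures X (V X T x)"
  proof (rule in_weak_star_closure_ofI[OF prob_borel_measures_imp_finite_borel_measures[OF \<nu>]])
    fix F :: "('a \<Rightarrow> real) set" and e :: real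
    assume F: "finite F" "\<forall>f\<in>F. continuous_on X f" and e: "0 < e"
    obtain \<mu> n0 where \<mu>: "\<And>n. \<mu> n \<in> V X T x"
      and close: "\<And>n f. n0 \<le> n \<Longrightarrow> f \<in> F \<Longrightarrow>
        \<bar>integral\<^sup>L (Emp X T x n) f - integral\<^sup>L (\<mu> n) f\<bar> < e / 4"
      using Emp_near_V_sequence[OF assms(1,3,4) F, of "e / 4"] e by auto
    have "\<mu> n \<in> prob_borel_measures X" for n using \<mu>[of n] by (simp add: V_def)
    from eventually_abel_mean_in_weak_star_nbhd[OF assms(1,3,4) N(1) conv this F e close]
    obtain k where "abel_mean X \<mu> (N k) \<in> weak_star_nbhd X \<nu> F e"
      unfolding eventually_sequentially by blast
    moreover have "abel_mean X \<mu> (N k) \<in> conv_measures X (V X T x)"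
      using N(2)[rule_format, of k] \<mu> by (intro abel_mean_in_conv_measures) auto
    ultimately show "\<exists>c\<in>conv_measures X (V X T x). c \<in> weak_star_nbhd X \<nu> F e" by blast
  qed
qed

end
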